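(* In the standard LLP setup, fix $N\ge1$. If the optimistic LLP supervisor is valid, i.e. $L(G,\gamma^N_{optm})=\overline{K^\uparrow}$, then there is no run-time error in $L(G,\gamma^N_{optm})$, i.e. there is no $s\in L(G,\gamma^N_{optm})$ with $f^N_{optm}(s)=\emptyset$.
   Context: Standard LLP setup. $\Sigma=\Sigma_c\,\dot\cup\,\Sigma_{uc}$ is a finite alphabet partitioned into controllable and uncontrollable events. The plant $G$ has generated language $L(G)$ and marked language $L_m(G)$ with $L(G)=\overline{L_m(G)}$ ($\overline{M}$ = set of prefixes of strings in $M$). The legal language $K\subseteq L_m(G)$ satisfies $K=\overline{K}\cap L_m(G)$. For a prefix-closed $L$, $M$ is controllable w.r.t. $L$ if $\overline{M}\Sigma_{uc}\cap L\subseteq\overline{M}$; $K^\uparrow$ is the supremal sublanguage of $K$ controllable w.r.t. $L(G)$. For a language $L$ and $s\in\Sigma^*$: $L/s=\{t: st\in L\}$; $L|_N=\{t\in L:|t|\le N\}$; $\Sigma_{L(G)}(s)=\{\sigma\in\Sigma: s\sigma\in L(G)\}$. $M^{\uparrow/s|_N}$ is the supremal sublanguage of $M$ controllable w.r.t. $L(G)/s|_N$. Optimistic attitude: $f^N_{optm}(s)=[K/s|_N\cup(\overline{K}/s|_N\setminus\overline{K}/s|_{N-1})]^{\uparrow/s|_N}$; control policy $\gamma^N_{optm}(s)=(\overline{f^N_{optm}(s)}\cap\Sigma)\cup(\Sigma_{uc}\cap\Sigma_{L(G)}(s))$. Closed-loop language $L(G,\gamma)$: $\epsilon\in L(G,\gamma)$,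 and $s\sigma\in L(G,\gamma)$ iff $s\in L(G,\gamma)$, $s\sigma\in L(G)$, $\sigma\in\gamma(s)$. A supervisor with policy $\gamma^N$ is valid if $L(G,\gamma^N)=\overline{K^\uparrow}$. A run-time error occurs at $s$ if $s\in L(G,\gamma^N)$ and $f^N(s)=\emptyset$. *)

theory Defs
  imports Main
begin

definition pref :: "'a list set \<Rightarrow> 'a list set" where
  "pref M = {s. \<exists>t. s @ t \<in> M}"

definition quot :: "'a list set \<Rightarrow> 'a list \<Rightarrow> 'a list set" where
  "quot L s = {t. s @ t \<in> L}"

definition trunc :: "'a list set \<Rightarrow> nat \<Rightarrow> 'a list set" where
  "trunc L N = {t \<in> L. length t \<le> N}"

definition controllable :: "'a list set \<Rightarrow> 'a list set \<Rightarrow> 'a set \<Rightarrow> bool" where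
  "controllable M L Sigma_uc \<longleftrightarrow>
     {s @ [\<sigma>] | s \<sigma>. s \<in> pref M \<and> \<sigma> \<in> Sigma_uc} \<inter> L \<subseteq> pref M"

definition supC :: "'a list set \<Rightarrow> 'a list set \<Rightarrow> 'a set \<Rightarrow> 'a list set" where
  "supC M L Sigma_uc = \<Union>{M'. M' \<subseteq> M \<and> controllable M' L Sigma_uc}"

definition enabled :: "'a set \<Rightarrow> 'a list set \<Rightarrow> 'a list \<Rightarrow> 'a set" where
  "enabled \<Sigma> L s = {\<sigma> \<in> \<Sigma>. s @ [\<sigma>] \<in> L}"

definition f_optm :: "'a set \<Rightarrow> 'a list set \<Rightarrow> 'a list set \<Rightarrow> nat \<Rightarrow> 'a list \<Rightarrow> 'a list set" where
  "f_optm Sigma_uc LG K N s =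
     supC (trunc (quot K s) N \<union>
           (trunc (quot (pref K) s) N - trunc (quot (pref K) s) (N - 1)))
          (trunc (quot LG s) N) Sigma_uc"

(* control policy gamma^N_optm(s); "pref(f(s)) \<inter> \<Sigma>" = events whose length-one string is in pref(f(s)) *)
definition gamma_optm :: "'a set \<Rightarrow> 'a set \<Rightarrow> 'a list set \<Rightarrow> 'a list set \<Rightarrow> nat \<Rightarrow> 'a list \<Rightarrow> 'a set" where
  "gamma_optm \<Sigma> Sigma_uc LG K N s =
     {\<sigma> \<in> \<Sigma>. [\<sigma>] \<in> pref (f_optm Sigma_uc LG K N s)} \<union> (Sigma_uc \<inter> enabled \<Sigma> LG s)"

inductive_set closed_loop :: "'a list set \<Rightarrow> ('a list \<Rightarrow> 'a set) \<Rightarrow> 'a list set"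
  for LG :: "'a list set" and \<gamma> :: "'a list \<Rightarrow> 'a set" where
  eps: "[] \<in> closed_loop LG \<gamma>"
| step: "s \<in> closed_loop LG \<gamma> \<Longrightarrow> s @ [\<sigma>] \<in> LG \<Longrightarrow> \<sigma> \<in> \<gamma> s \<Longrightarrow> s @ [\<sigma>] \<in> closed_loop LG \<gamma>"

end

theory Submission
  imports Defs
begin

text \<open>If the supervisor is valid, every reachable string s is a prefix of K^sup.
  The continuations of s inside K^sup, cut off at the lookahead horizon N (complete strings of
  length at most N, and unfinished ones of length exactly N), form a nonempty sublanguage of
  the optimistic candidate language that is controllable with respect to the N-step
  lookahead window L(G)/s|N. Hence the supremal such sublanguage f_optm(s) is nonempty.\<close>

lemma supC_subset: "supC M L U \<subseteq> M"
  unfolding supC_def by auto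

lemma supC_greatest: "M' \<subseteq> M \<Longrightarrow> controllable M' L U \<Longrightarrow> M' \<subseteq> supC M L U"
  unfolding supC_def by auto

lemma controllable_supC: "controllable (supC M L U) L U"
  unfolding controllable_def supC_def pref_def by blast

lemma pref_mono: "M \<subseteq> M' \<Longrightarrow> pref M \<subseteq> pref M'"
  unfolding pref_def by auto

lemma pref_quot: "pref (quot M s) = quot (pref M) s"
  unfolding pref_def quot_def by auto

lemma controllable_quot:
  "controllable M L U \<Longrightarrow> controllable (quot M s) (quot L s) U"
  unfolding controllable_def pref_quot by (auto simp: quot_def)

definition horizon_cut :: "'a list set \<Rightarrow> nat \<Rightarrow> 'a list set" where
  "horizon_cut L N = trunc L N \<union> {t \<in> pref L. length t = N}"

lemma pref_horizon_cut: "pref (horizon_cut L N) = trunc (pref L) N"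
proof
  show "pref (horizon_cut L N) \<subseteq> trunc (pref L) N"
    unfolding horizon_cut_def pref_def trunc_def by auto
next
  show "trunc (pref L) N \<subseteq> pref (horizon_cut L N)"
  proof
    fix t assume "t \<in> trunc (pref L) N"
    then obtain u where tu: "t @ u \<in> L" and t: "length t \<le> N"
      unfolding trunc_def pref_def by auto
    have take_tu: "take N (t @ u) = t @ take (N - length t) u"
      using t by simp
    have "take N (t @ u) \<in> horizon_cut L N"
    proof (cases "length (t @ u) \<le> N")
      case True
      then show ?thesis using tu unfolding horizon_cut_def trunc_def by auto
    next
      case False
      have "take N (t @ u) \<in> pref L"
        using tu unfolding pref_def by (metis append_take_drop_id mem_Collect_eq)
      then show ?thesis using False unfolding horizon_cut_def by auto
    qed
    then show "t \<in> pref (horizon_cut L N)"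
      unfolding take_tu pref_def by auto
  qed
qed

lemma controllable_horizon_cut:
  assumes "controllable L LG U"
  shows "controllable (horizon_cut L N) (trunc LG N) U"
  using assms unfolding controllable_def pref_horizon_cut by (auto simp: trunc_def)

lemma horizon_cut_nonempty:
  assumes "[] \<in> pref L"
  shows "horizon_cut L N \<noteq> {}"
proof -
  have "[] \<in> pref (horizon_cut L N)"
    using assms unfolding pref_horizon_cut by (simp add: trunc_def)
  then show ?thesis
    unfolding pref_def by auto
qed

text \<open>The unfinished strings of length N lie in the optimistic part of the candidate
  language only because N - 1 < N, which fails for the truncated subtraction when N = 0.\<close>

lemma horizon_cut_subset:
  assumes "L \<subseteq> L'" and "N \<ge> 1"
  shows "horizon_cut L N \<subseteq> trunc L' N \<union> (trunc (pref L') N - trunc (pref L') (N - 1))"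
  using assms pref_mono[OF assms(1)] unfolding horizon_cut_def trunc_def by auto

lemma f_optm_nonempty:
  assumes "N \<ge> 1" and "s \<in> pref (supC K LG U)"
  shows "f_optm U LG K N s \<noteq> {}"
proof -
  define L where "L = quot (supC K LG U) s"
  have "[] \<in> pref L"
    using assms(2) unfolding L_def pref_quot by (simp add: quot_def)
  moreover have "L \<subseteq> quot K s"
    using supC_subset unfolding L_def quot_def by auto
  moreover have "controllable L (quot LG s) U"
    unfolding L_def by (intro controllable_quot controllable_supC)
  ultimately have "horizon_cut L N \<subseteq> f_optm U LG K N s"
    unfolding f_optm_def pref_quot[symmetric]
    using assms(1) by (intro supC_greatest horizon_cut_subset controllable_horizon_cut)
  then show ?thesis
    using horizon_cut_nonempty[OF \<open>[] \<in> pref L\<close>] by auto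
qed

theorem theorem3:
  fixes \<Sigma> Sigma_c Sigma_uc :: "'a set" and Lm LG K :: "'a list set" and N :: nat
  assumes "finite \<Sigma>" and "Sigma_c \<union> Sigma_uc = \<Sigma>" and "Sigma_c \<inter> Sigma_uc = {}"
    and "Lm \<subseteq> lists \<Sigma>" and "LG = pref Lm"
    and "K \<subseteq> Lm" and "K = pref K \<inter> Lm"
    and "N \<ge> 1"
    and "closed_loop LG (gamma_optm \<Sigma> Sigma_uc LG K N) = pref (supC K LG Sigma_uc)"
  shows "\<not> (\<exists>s \<in> closed_loop LG (gamma_optm \<Sigma> Sigma_uc LG K N). f_optm Sigma_uc LG K N s = {})"
  using f_optm_nonempty[OF \<open>N \<ge> 1\<close>] assms(9) by auto

end
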